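(* For $n\ge1$ let $M_n$ be the number of domino tilings of $K_4\times P_n$. Then $M_n=4M_{n-1}+4M_{n-2}-M_{n-3}$ for $n\ge4$, and for all $n\ge1$, $$M_n=\frac17\Big[\Big(\tfrac{5+\sqrt{21}}2\Big)^{n+1}+\Big(\tfrac{5-\sqrt{21}}2\Big)^{n+1}+2(-1)^n\Big].$$
   Context: $H\times K$ denotes the Cartesian product of graphs. $P_n$ is the path on $n$ vertices and $K_4$ is the complete graph on $4$ vertices. A domino tiling of a finite graph is a perfect matching, and the number of domino tilings is the number of perfect matchings. *)

theory Defs
  imports Complex_Main
begin

type_synonym 'a graph = "'a set \<times> ('a \<Rightarrow> 'a \<Rightarrow> bool)"

definition verts :: "'a graph \<Rightarrow> 'a set" where "verts G = fst G"
definition adj :: "'a graph \<Rightarrow> 'a \<Rightarrow> 'a \<Rightarrow> bool" where "adj G = snd G"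

definition edges :: "'a graph \<Rightarrow> 'a set set" where
  "edges G = {{u, v} | u v. u \<in> verts G \<and> v \<in> verts G \<and> adj G u v}"

definition complete_graph :: "nat \<Rightarrow> nat graph" where
  "complete_graph m = ({0..<m}, \<lambda>u v. u \<noteq> v)"

definition path_graph :: "nat \<Rightarrow> nat graph" where
  "path_graph n = ({0..<n}, \<lambda>u v. v = Suc u \<or> u = Suc v)"

definition cart_prod :: "'a graph \<Rightarrow> 'b graph \<Rightarrow> ('a \<times> 'b) graph" where
  "cart_prod H K = (verts H \<times> verts K,
     \<lambda>(h, k) (h', k'). (h = h' \<and> adj K k k') \<or> (k = k' \<and> adj H h h'))"

definition perfect_matching :: "'a graph \<Rightarrow> 'a set set \<Rightarrow> bool" where
  "perfect_matching G M \<longleftrightarrow> M \<subseteq> edges G \<and> (\<forall>v \<in> verts G. \<exists>!e \<in> M. v \<in> e)"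

definition num_domino_tilings :: "'a graph \<Rightarrow> nat" where
  "num_domino_tilings G = card {M. perfect_matching G M}"

end

theory Submission
  imports Defs
begin

text \<open>Build the prism \<open>K\<^sub>4 \<times> P\<^sub>n\<close> layer by layer and expand the perfect matchings along
  the vertices of the topmost, partially filled layer: each such vertex is matched inside its
  layer or to the vertex directly below it. Writing \<open>m\<^sub>n\<close>, \<open>s\<^sub>n\<close>, \<open>t\<^sub>n\<close> for the counts
  with a full, a two-vertex (summed over the six pairs) and an empty layer above \<open>n\<close> full
  layers, this gives \<open>m\<^sub>n\<^sub>+\<^sub>1 = 3m\<^sub>n + s\<^sub>n + t\<^sub>n\<close>, \<open>s\<^sub>n\<^sub>+\<^sub>1 = 6m\<^sub>n + s\<^sub>n\<close> and
  \<open>t\<^sub>n\<^sub>+\<^sub>1 = m\<^sub>n\<close>. Eliminating \<open>m\<close> and \<open>s\<close> yields \<open>t\<^sub>n\<^sub>+\<^sub>3 + t\<^sub>n = 4t\<^sub>n\<^sub>+\<^sub>2 + 4t\<^sub>n\<^sub>+\<^sub>1\<close>,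
  whose characteristic polynomial \<open>(x + 1)(x\<^sup>2 - 5x + 1)\<close> has the roots \<open>(5 \<plusminus> \<surd>21)/2\<close>
  and \<open>-1\<close>; the initial values \<open>t\<^sub>0 = 1\<close>, \<open>t\<^sub>1 = 3\<close>, \<open>t\<^sub>2 = 16\<close> fix the closed form.\<close>

section \<open>Perfect matchings\<close>

definition perfect_matchings :: "'a set \<Rightarrow> ('a \<Rightarrow> 'a \<Rightarrow> bool) \<Rightarrow> 'a set set set" where
  "perfect_matchings W R = {M. perfect_matching (W, R) M}"

lemma perfect_matchings_iff:
  "M \<in> perfect_matchings W R \<longleftrightarrow>
     M \<subseteq> {{u, v} | u v. u \<in> W \<and> v \<in> W \<and> R u v} \<and> (\<forall>v\<in>W. \<exists>!e\<in>M. v \<in> e)"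
  by (simp add: perfect_matchings_def perfect_matching_def edges_def verts_def adj_def)

lemma num_domino_tilings_eq_card: "num_domino_tilings G = card (perfect_matchings (verts G) (adj G))"
  by (simp add: num_domino_tilings_def perfect_matchings_def verts_def adj_def)

lemma perfect_matchings_edgeE:
  assumes "M \<in> perfect_matchings W R" "e \<in> M"
  obtains a b where "e = {a, b}" "a \<in> W" "b \<in> W" "R a b"
  using assms by (auto simp: perfect_matchings_iff)

lemma perfect_matchings_edge_subset: "M \<in> perfect_matchings W R \<Longrightarrow> e \<in> M \<Longrightarrow> e \<subseteq> W"
  by (auto simp: perfect_matchings_iff)

lemma perfect_matchings_cover: "M \<in> perfect_matchings W R \<Longrightarrow> w \<in> W \<Longrightarrow> \<exists>!e\<in>M. w \<in> e"
  by (simp add: perfect_matchings_iff)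

lemma finite_perfect_matchings: "finite W \<Longrightarrow> finite (perfect_matchings W R)"
  by (rule finite_subset[of _ "Pow (Pow W)"]) (auto simp: perfect_matchings_iff)

lemma perfect_matchings_empty: "perfect_matchings {} R = {{}}"
  by (auto simp: perfect_matchings_iff)

lemma perfect_matchings_remove_edge:
  assumes M: "M \<in> perfect_matchings W R" and e: "{v, u} \<in> M"
  shows "M - {{v, u}} \<in> perfect_matchings (W - {v, u}) R"
  unfolding perfect_matchings_iff
proof (intro conjI ballI subsetI)
  have unique: "e' = {v, u}" if "e' \<in> M" "x \<in> e'" "x \<in> {v, u}" for e' x
    using perfect_matchings_cover[OF M] perfect_matchings_edge_subset[OF M e] e that by blast
  fix e' assume e': "e' \<in> M - {{v, u}}"
  then obtain a b where "e' = {a, b}" "a \<in> W" "b \<in> W" "R a b"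
    using perfect_matchings_edgeE[OF M] by blast
  moreover have "v \<notin> e'" "u \<notin> e'" using unique e' by auto
  ultimately show "e' \<in> {{x, y} |x y. x \<in> W - {v, u} \<and> y \<in> W - {v, u} \<and> R x y}" by blast
next
  fix w assume w: "w \<in> W - {v, u}"
  then obtain e' where "e' \<in> M" "w \<in> e'" "\<And>e''. e'' \<in> M \<Longrightarrow> w \<in> e'' \<Longrightarrow> e'' = e'"
    using perfect_matchings_cover[OF M] by (metis DiffD1)
  then show "\<exists>!e\<in>M - {{v, u}}. w \<in> e" using w by blast
qed

lemma perfect_matchings_insert_edge:
  assumes M: "M \<in> perfect_matchings (W - {v, u}) R" and vu: "v \<in> W" "u \<in> W" "R v u"
  shows "insert {v, u} M \<in> perfect_matchings W R"
  unfolding perfect_matchings_iff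
proof (intro conjI ballI)
  have "M \<subseteq> {{x, y} |x y. x \<in> W \<and> y \<in> W \<and> R x y}"
    using M unfolding perfect_matchings_iff by blast
  then show "insert {v, u} M \<subseteq> {{x, y} |x y. x \<in> W \<and> y \<in> W \<and> R x y}"
    using vu by blast
next
  fix w assume "w \<in> W"
  have disjoint: "v \<notin> e \<and> u \<notin> e" if "e \<in> M" for e
    using perfect_matchings_edge_subset[OF M that] by blast
  show "\<exists>!e\<in>insert {v, u} M. w \<in> e"
  proof (cases "w = v \<or> w = u")
    case True
    then show ?thesis using disjoint by blast
  next
    case False
    then have "\<exists>!e\<in>M. w \<in> e" using perfect_matchings_cover[OF M] \<open>w \<in> W\<close> by blast
    then show ?thesis using False by auto
  qed
qed

lemma perfect_matchings_split:
  assumes sym: "\<And>x y. R x y \<Longrightarrow> R y x" and v: "v \<in> W"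
  shows "perfect_matchings W R
           = (\<Union>u\<in>{u\<in>W. R v u}. insert {v, u} ` perfect_matchings (W - {v, u}) R)"
proof (intro equalityI subsetI)
  fix M assume M: "M \<in> perfect_matchings W R"
  obtain e where e: "e \<in> M" "v \<in> e" using perfect_matchings_cover[OF M v] by blast
  then obtain a b where ab: "e = {a, b}" "a \<in> W" "b \<in> W" "R a b"
    using perfect_matchings_edgeE[OF M] by blast
  obtain u where u: "e = {v, u}" "u \<in> W" "R v u"
  proof (cases "v = a")
    case True
    then show ?thesis using that ab by blast
  next
    case False
    then have "v = b" using ab(1) e(2) by blast
    then show ?thesis using that[of a] ab sym by (simp add: insert_commute)
  qed
  have "M - {{v, u}} \<in> perfect_matchings (W - {v, u}) R"
    using perfect_matchings_remove_edge[OF M] e(1) u(1) by simp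
  moreover have "M = insert {v, u} (M - {{v, u}})" using e(1) u(1) by blast
  ultimately show "M \<in> (\<Union>u\<in>{u\<in>W. R v u}. insert {v, u} ` perfect_matchings (W - {v, u}) R)"
    using u(2,3) by blast
next
  fix M assume "M \<in> (\<Union>u\<in>{u\<in>W. R v u}. insert {v, u} ` perfect_matchings (W - {v, u}) R)"
  then obtain u M' where u: "u \<in> W" "R v u" and M': "M' \<in> perfect_matchings (W - {v, u}) R"
    and "M = insert {v, u} M'"
    by blast
  with perfect_matchings_insert_edge[OF M' v u] show "M \<in> perfect_matchings W R" by simp
qed

lemma card_perfect_matchings_split:
  assumes sym: "\<And>x y. R x y \<Longrightarrow> R y x" and v: "v \<in> W" and fin: "finite W"
  shows "card (perfect_matchings W R) = (\<Sum>u | u \<in> W \<and> R v u. card (perfect_matchings (W - {v, u}) R))"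
proof -
  let ?P = "\<lambda>u. perfect_matchings (W - {v, u}) R"
  have avoids: "{v, x} \<notin> A" if "A \<in> ?P u" for A u x
    using perfect_matchings_edge_subset[OF that] by blast
  have inj: "inj_on (insert {v, u}) (?P u)" for u
  proof (rule inj_onI)
    fix A B assume "A \<in> ?P u" "B \<in> ?P u" "insert {v, u} A = insert {v, u} B"
    then show "A = B" by (simp add: insert_ident avoids)
  qed
  have disjoint: "insert {v, i} ` ?P i \<inter> insert {v, j} ` ?P j = {}" if "i \<noteq> j" for i j
  proof -
    have "{v, i} \<noteq> {v, j}" using that by (auto simp: doubleton_eq_iff)
    then have "insert {v, i} A \<noteq> insert {v, j} B" if "B \<in> ?P j" for A B
      using avoids[OF that] by blast
    then show ?thesis by blast
  qed
  have "card (perfect_matchings W R) = card (\<Union>u\<in>{u\<in>W. R v u}. insert {v, u} ` ?P u)"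
    by (simp add: perfect_matchings_split[OF sym v])
  also have "\<dots> = (\<Sum>u | u \<in> W \<and> R v u. card (insert {v, u} ` ?P u))"
    using fin disjoint by (intro card_UN_disjoint) (auto intro: finite_perfect_matchings)
  also have "\<dots> = (\<Sum>u | u \<in> W \<and> R v u. card (?P u))"
    using inj by (simp add: card_image)
  finally show ?thesis .
qed

section \<open>Partially filled prisms\<close>

definition prism_adj :: "nat \<times> nat \<Rightarrow> nat \<times> nat \<Rightarrow> bool" where
  "prism_adj = (\<lambda>(h, k) (h', k'). (h = h' \<and> (k' = Suc k \<or> k = Suc k')) \<or> (k = k' \<and> h \<noteq> h'))"

lemma prism_adj_sym: "prism_adj x y \<Longrightarrow> prism_adj y x"
  by (cases x; cases y) (auto simp: prism_adj_def)

lemma adj_cart_prod_complete_path: "adj (cart_prod (complete_graph m) (path_graph n)) = prism_adj"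
  by (auto simp: adj_def cart_prod_def complete_graph_def path_graph_def prism_adj_def fun_eq_iff)

definition region :: "nat \<Rightarrow> nat set \<Rightarrow> nat set \<Rightarrow> (nat \<times> nat) set" where
  "region n Y X = {0..<4} \<times> {0..<n} \<union> Y \<times> {n} \<union> X \<times> {Suc n}"

definition region_tilings :: "nat \<Rightarrow> nat set \<Rightarrow> nat set \<Rightarrow> nat" where
  "region_tilings n Y X = card (perfect_matchings (region n Y X) prism_adj)"

lemma verts_cart_prod_complete_path:
  "verts (cart_prod (complete_graph 4) (path_graph n)) = region n {} {}"
  by (auto simp: verts_def cart_prod_def complete_graph_def path_graph_def region_def)

lemma num_domino_tilings_prism:
  "num_domino_tilings (cart_prod (complete_graph 4) (path_graph n)) = region_tilings n {} {}"
  by (simp add: num_domino_tilings_eq_card region_tilings_def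
      verts_cart_prod_complete_path adj_cart_prod_complete_path)

lemma region_tilings_Suc: "region_tilings (Suc n) Y {} = region_tilings n {0..<4} Y"
proof -
  have "region (Suc n) Y {} = region n {0..<4} Y" by (auto simp: region_def less_Suc_eq)
  then show ?thesis by (simp add: region_tilings_def)
qed

lemma region_tilings_empty: "region_tilings 0 {} {} = 1"
  by (simp add: region_tilings_def region_def perfect_matchings_empty)

lemma card_perfect_matchings_region_split:
  assumes "v \<in> region n Y X" "finite Y" "finite X"
  shows "card (perfect_matchings (region n Y X) prism_adj)
       = (\<Sum>u | u \<in> region n Y X \<and> prism_adj v u. card (perfect_matchings (region n Y X - {v, u}) prism_adj))"
  using assms prism_adj_sym
  by (intro card_perfect_matchings_split) (auto simp: region_def)

lemma region_tilings_insert: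
  assumes v: "v \<notin> X" and fin: "finite X" "finite Y"
  shows "region_tilings n Y (insert v X)
       = (\<Sum>x\<in>X. region_tilings n Y (X - {x})) + (if v \<in> Y then region_tilings n (Y - {v}) X else 0)"
proof -
  let ?W = "region n Y (insert v X)"
  let ?N = "\<lambda>u. card (perfect_matchings (?W - {(v, Suc n), u}) prism_adj)"
  have nbrs: "{u. u \<in> ?W \<and> prism_adj (v, Suc n) u}
      = (\<lambda>x. (x, Suc n)) ` X \<union> (if v \<in> Y then {(v, n)} else {})"
    using v by (auto simp: region_def prism_adj_def)
  have layer: "?W - {(v, Suc n), (x, Suc n)} = region n Y (X - {x})" if "x \<in> X" for x
    using v that by (auto simp: region_def)
  have below: "?W - {(v, Suc n), (v, n)} = region n (Y - {v}) X"
    using v by (auto simp: region_def)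
  have "region_tilings n Y (insert v X) = (\<Sum>u | u \<in> ?W \<and> prism_adj (v, Suc n) u. ?N u)"
    unfolding region_tilings_def using fin
    by (intro card_perfect_matchings_region_split) (auto simp: region_def)
  also have "\<dots> = (\<Sum>u\<in>(\<lambda>x. (x, Suc n)) ` X. ?N u) + (\<Sum>u\<in>(if v \<in> Y then {(v, n)} else {}). ?N u)"
    unfolding nbrs using fin by (intro sum.union_disjoint) auto
  also have "(\<Sum>u\<in>(\<lambda>x. (x, Suc n)) ` X. ?N u) = (\<Sum>x\<in>X. region_tilings n Y (X - {x}))"
    by (subst sum.reindex) (auto simp: inj_on_def layer region_tilings_def intro: sum.cong)
  finally show ?thesis by (simp add: below region_tilings_def)
qed

lemma region_tilings_insert_base:
  assumes v: "v \<notin> Y" and fin: "finite Y"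
  shows "region_tilings 0 (insert v Y) {} = (\<Sum>x\<in>Y. region_tilings 0 (Y - {x}) {})"
proof -
  let ?W = "region 0 (insert v Y) {}"
  let ?N = "\<lambda>u. card (perfect_matchings (?W - {(v, 0), u}) prism_adj)"
  have nbrs: "{u. u \<in> ?W \<and> prism_adj (v, 0) u} = (\<lambda>x. (x, 0)) ` Y"
    using v by (auto simp: region_def prism_adj_def)
  have layer: "?W - {(v, 0), (x, 0)} = region 0 (Y - {x}) {}" if "x \<in> Y" for x
    using v that by (auto simp: region_def)
  have "region_tilings 0 (insert v Y) {} = (\<Sum>u | u \<in> ?W \<and> prism_adj (v, 0) u. ?N u)"
    unfolding region_tilings_def using fin
    by (intro card_perfect_matchings_region_split) (auto simp: region_def)
  also have "\<dots> = (\<Sum>x\<in>Y. region_tilings 0 (Y - {x}) {})"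
    unfolding nbrs
    by (subst sum.reindex) (auto simp: inj_on_def layer region_tilings_def intro: sum.cong)
  finally show ?thesis .
qed

lemma region_tilings_pair:
  assumes "a \<noteq> b" "a \<in> Y" "b \<in> Y" "finite Y"
  shows "region_tilings n Y {a, b} = region_tilings n Y {} + region_tilings n (Y - {a, b}) {}"
proof -
  have "region_tilings n Y {a, b} = region_tilings n Y {} + region_tilings n (Y - {a}) {b}"
    using region_tilings_insert[of a "{b}" Y n] assms by simp
  also have "region_tilings n (Y - {a}) {b} = region_tilings n (Y - {a} - {b}) {}"
    using region_tilings_insert[of b "{}" "Y - {a}" n] assms by simp
  also have "Y - {a} - {b} = Y - {a, b}"
    by blast
  finally show ?thesis .
qed

section \<open>The transfer recurrences\<close>

text \<open>\<open>top4\<close>, \<open>top2\<close>, \<open>top0\<close> are the counts \<open>m\<close>, \<open>s\<close>, \<open>t\<close>.\<close>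

definition top4 :: "nat \<Rightarrow> nat" where
  "top4 n = region_tilings n {0, 1, 2, 3} {}"

definition top2 :: "nat \<Rightarrow> nat" where
  "top2 n = region_tilings n {2, 3} {} + region_tilings n {1, 3} {} + region_tilings n {1, 2} {}
          + region_tilings n {0, 3} {} + region_tilings n {0, 2} {} + region_tilings n {0, 1} {}"

definition top0 :: "nat \<Rightarrow> nat" where
  "top0 n = region_tilings n {} {}"

lemma atLeastLessThan_four: "{0..<4} = {0, 1, 2, 3 :: nat}"
  by auto

lemma top4_Suc: "top4 (Suc n) = 3 * top4 n + top2 n + top0 n"
  unfolding top4_def top2_def top0_def region_tilings_Suc atLeastLessThan_four
  by (simp add: region_tilings_insert insert_Diff_if del: One_nat_def)

lemma top2_Suc: "top2 (Suc n) = 6 * top4 n + top2 n"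
  unfolding top4_def top2_def region_tilings_Suc atLeastLessThan_four
  by (simp add: region_tilings_pair insert_Diff_if insert_commute del: One_nat_def)

lemma top0_Suc: "top0 (Suc n) = top4 n"
  unfolding top4_def top0_def region_tilings_Suc atLeastLessThan_four ..

lemma top4_0: "top4 0 = 3" and top2_0: "top2 0 = 6" and top0_0: "top0 0 = 1"
  by (simp_all add: top4_def top2_def top0_def region_tilings_insert_base insert_Diff_if
      region_tilings_empty)

lemma top0_recurrence: "top0 (k + 3) + top0 k = 4 * top0 (k + 2) + 4 * top0 (k + 1)"
proof -
  have shift: "k + 3 = Suc (Suc (Suc k))" "k + 2 = Suc (Suc k)" "k + 1 = Suc k" by simp_all
  show ?thesis
    unfolding shift
    using top4_Suc[of "Suc k"] top4_Suc[of k] top2_Suc[of k]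
      top0_Suc[of "Suc (Suc k)"] top0_Suc[of "Suc k"] top0_Suc[of k]
    by linarith
qed

lemma top0_initial: "top0 1 = 3" "top0 2 = 16"
  using top0_Suc[of 0] top0_Suc[of 1] top4_Suc[of 0] top4_0 top2_0 top0_0
  by (simp_all add: numeral_2_eq_2)

section \<open>The closed form\<close>

lemma linear_recurrence_unique:
  fixes f g :: "nat \<Rightarrow> 'a :: comm_ring"
  assumes f: "\<And>k. f (k + 3) = a * f (k + 2) + b * f (k + 1) + c * f k"
    and g: "\<And>k. g (k + 3) = a * g (k + 2) + b * g (k + 1) + c * g k"
    and "f 0 = g 0" "f 1 = g 1" "f 2 = g 2"
  shows "f n = g n"
proof (induction n rule: less_induct)
  case (less n)
  show ?case
  proof (cases "n < 3")
    case True
    then have "n = 0 \<or> n = 1 \<or> n = 2" by auto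
    then show ?thesis using assms(3-) by auto
  next
    case False
    then obtain k where "n = k + 3" by (metis add.commute le_Suc_ex not_less)
    then show ?thesis using f[of k] g[of k] less.IH[of k] less.IH[of "k + 1"] less.IH[of "k + 2"] by simp
  qed
qed

lemma power_linear_recurrence:
  fixes x :: "'a :: comm_ring_1"
  assumes "x ^ 3 = a * x ^ 2 + b * x + c"
  shows "x ^ (k + 3) = a * x ^ (k + 2) + b * x ^ (k + 1) + c * x ^ k"
proof -
  have "x ^ (k + 3) = x ^ k * (a * x ^ 2 + b * x + c)"
    unfolding power_add assms ..
  then show ?thesis
    unfolding power_add by (simp add: algebra_simps)
qed

definition closed_form :: "nat \<Rightarrow> real" where
  "closed_form n = (1/7) * (((5 + sqrt 21) / 2) ^ (n + 1) + ((5 - sqrt 21) / 2) ^ (n + 1) + 2 * (-1) ^ n)"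

lemma characteristic_roots:
  fixes x :: real
  assumes "x = (5 + sqrt 21) / 2 \<or> x = (5 - sqrt 21) / 2"
  shows "x ^ 3 = 4 * x ^ 2 + 4 * x + -1"
proof -
  have "2 * x - 5 = sqrt 21 \<or> 2 * x - 5 = - sqrt 21" using assms by auto
  then have "(2 * x - 5)\<^sup>2 = 21" by auto
  moreover have "(2 * x - 5)\<^sup>2 = 4 * x\<^sup>2 - 20 * x + 25" by (simp add: power2_eq_square algebra_simps)
  ultimately have quadratic: "x\<^sup>2 = 5 * x - 1" by linarith
  have "x ^ 3 = x * (5 * x - 1)" using quadratic by (simp add: power2_eq_square power3_eq_cube)
  also have "\<dots> = 5 * x\<^sup>2 - x" by (simp add: power2_eq_square algebra_simps)
  finally show ?thesis using quadratic by linarith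
qed

lemma closed_form_recurrence:
  "closed_form (k + 3) = 4 * closed_form (k + 2) + 4 * closed_form (k + 1) + -1 * closed_form k"
proof -
  define \<alpha> :: real where "\<alpha> = (5 + sqrt 21) / 2"
  define \<beta> :: real where "\<beta> = (5 - sqrt 21) / 2"
  have \<alpha>: "\<alpha> ^ (k + 1 + 3) = 4 * \<alpha> ^ (k + 1 + 2) + 4 * \<alpha> ^ (k + 1 + 1) + -1 * \<alpha> ^ (k + 1)"
    by (rule power_linear_recurrence, rule characteristic_roots) (simp add: \<alpha>_def)
  have \<beta>: "\<beta> ^ (k + 1 + 3) = 4 * \<beta> ^ (k + 1 + 2) + 4 * \<beta> ^ (k + 1 + 1) + -1 * \<beta> ^ (k + 1)"
    by (rule power_linear_recurrence, rule characteristic_roots) (simp add: \<beta>_def)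
  have minus_one: "(-1) ^ (k + 3) = 4 * (-1) ^ (k + 2) + 4 * (-1) ^ (k + 1) + -1 * (-1 :: real) ^ k"
    by (rule power_linear_recurrence) simp
  have closed_form: "closed_form j = (1/7) * (\<alpha> ^ (j + 1) + \<beta> ^ (j + 1) + 2 * (-1) ^ j)" for j
    by (simp add: closed_form_def \<alpha>_def \<beta>_def)
  have shift: "k + 3 + 1 = k + 1 + 3" "k + 2 + 1 = k + 1 + 2" by simp_all
  show ?thesis
    unfolding closed_form shift \<alpha> \<beta> minus_one by (simp only: distrib_left)
qed

lemma closed_form_initial: "closed_form 0 = 1" "closed_form 1 = 3" "closed_form 2 = 16"
proof -
  define \<alpha> :: real where "\<alpha> = (5 + sqrt 21) / 2"
  define \<beta> :: real where "\<beta> = (5 - sqrt 21) / 2"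
  have sum: "\<alpha> + \<beta> = 5" and prod: "\<alpha> * \<beta> = 1"
    by (simp_all add: \<alpha>_def \<beta>_def field_simps)
  have "\<alpha>\<^sup>2 + \<beta>\<^sup>2 = (\<alpha> + \<beta>)\<^sup>2 - 2 * (\<alpha> * \<beta>)"
    by (simp add: power2_eq_square algebra_simps)
  then have squares: "\<alpha>\<^sup>2 + \<beta>\<^sup>2 = 23" by (simp add: sum prod)
  have "\<alpha> ^ 3 + \<beta> ^ 3 = (\<alpha> + \<beta>) ^ 3 - 3 * (\<alpha> * \<beta>) * (\<alpha> + \<beta>)"
    by (simp add: power3_eq_cube algebra_simps)
  then have cubes: "\<alpha> ^ 3 + \<beta> ^ 3 = 110" by (simp add: sum prod)
  have closed_form: "closed_form k = (\<alpha> ^ (k + 1) + \<beta> ^ (k + 1) + 2 * (-1) ^ k) / 7" for k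
    by (simp add: closed_form_def \<alpha>_def \<beta>_def)
  show "closed_form 0 = 1" "closed_form 1 = 3" "closed_form 2 = 16"
    using closed_form[of 0] closed_form[of 1, unfolded one_add_one] closed_form[of 2] sum squares cubes
    by simp_all
qed

lemma tilings_closed_form: "real (top0 n) = closed_form n"
proof (rule linear_recurrence_unique[where a = 4 and b = 4 and c = "-1"])
  show "real (top0 (k + 3)) = 4 * real (top0 (k + 2)) + 4 * real (top0 (k + 1)) + -1 * real (top0 k)" for k
    using arg_cong[OF top0_recurrence[of k], of real] by simp
  show "closed_form (k + 3) = 4 * closed_form (k + 2) + 4 * closed_form (k + 1) + -1 * closed_form k" for k
    by (rule closed_form_recurrence)
  show "real (top0 0) = closed_form 0" "real (top0 1) = closed_form 1" "real (top0 2) = closed_form 2"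
    using top0_0 top0_initial closed_form_initial by simp_all
qed

theorem theorem10:
  fixes M :: "nat \<Rightarrow> nat"
  assumes "\<And>n. M n = num_domino_tilings (cart_prod (complete_graph 4) (path_graph n))"
  shows "(\<forall>n\<ge>4. int (M n) = 4 * int (M (n - 1)) + 4 * int (M (n - 2)) - int (M (n - 3)))
    \<and> (\<forall>n\<ge>1. real (M n) = (1/7) * (((5 + sqrt 21) / 2) ^ (n + 1) + ((5 - sqrt 21) / 2) ^ (n + 1)
                                  + 2 * (-1) ^ n))"
proof -
  have M: "M n = top0 n" for n
    using assms by (simp add: num_domino_tilings_prism top0_def)
  have "int (M n) = 4 * int (M (n - 1)) + 4 * int (M (n - 2)) - int (M (n - 3))" if "n \<ge> 3" for n
  proof -
    obtain k where "n = k + 3" using \<open>n \<ge> 3\<close> by (metis le_add_diff_inverse2)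
    then show ?thesis using arg_cong[OF top0_recurrence[of k], of int] by (simp add: M)
  qed
  moreover have "real (M n) = closed_form n" for n
    using tilings_closed_form by (simp add: M)
  ultimately show ?thesis by (simp add: closed_form_def)
qed

end
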